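(* Let $R=(r_{st})$ be an $n\times n$ matrix over the complex numbers ($n\ge 2$). For $1\le i,j\le n$ let $R_{ij}$ be the matrix obtained from $R$ by replacing the $(i,j)$ entry by $0$ (all other entries unchanged). Then $$(n^2-n)\,d_2(R)=\sum_{1\le i,j\le n} d_2(R_{ij}).$$
   Context: For an $n\times n$ matrix $M=(m_{ij})$ ($n\ge 2$), the second immanant is $d_2(M)=\sum_{\sigma\in S_n}\chi_2(\sigma)\prod_{s=1}^n m_{s\sigma(s)}$, where $\chi_2$ is the irreducible character of the symmetric group $S_n$ corresponding to the partition $(2,1^{n-2})$. *)

theory Defs
  imports "HOL-Analysis.Analysis"
begin

text \<open>Irreducible character of S_n for the partition (2,1^(n-2)):
  it is the sign character times the character of the standard representation
  (partition (n-1,1)), i.e. sign(sigma) * (number of fixed points - 1).\<close>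
definition chi2 :: "('n::finite \<Rightarrow> 'n) \<Rightarrow> complex" where
  "chi2 \<sigma> = of_int (sign \<sigma>) * (of_nat (card {s. \<sigma> s = s}) - 1)"

definition d2 :: "complex^'n^'n \<Rightarrow> complex" where
  "d2 M = (\<Sum>\<sigma> | \<sigma> permutes (UNIV :: 'n::finite set).
             chi2 \<sigma> * (\<Prod>s\<in>UNIV. M $ s $ \<sigma> s))"

definition zero_entry :: "complex^'n^'n \<Rightarrow> 'n \<Rightarrow> 'n \<Rightarrow> complex^'n^'n" where
  "zero_entry R i j = (\<chi> s t. if s = i \<and> t = j then 0 else R $ s $ t)"

end

theory Submission
  imports Defs
begin

text \<open>Each permutation term of an immanant vanishes in exactly those n of the
  n^2 matrices R(i,j) with j = sigma(i), and is unchanged in the other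
  n^2 - n. The identity therefore holds for every generalized matrix function,
  whatever the weight on the permutations.\<close>

definition matrix_function :: "(('n::finite \<Rightarrow> 'n) \<Rightarrow> 'a::comm_semiring_1) \<Rightarrow> 'a^'n^'n \<Rightarrow> 'a" where
  "matrix_function f M = (\<Sum>\<sigma> | \<sigma> permutes (UNIV :: 'n set). f \<sigma> * (\<Prod>s\<in>UNIV. M $ s $ \<sigma> s))"

lemma d2_eq_matrix_function: "d2 = matrix_function chi2"
  by (simp add: fun_eq_iff d2_def matrix_function_def)

lemma prod_zero_entry:
  fixes R :: "complex^'n::finite^'n"
  shows "(\<Prod>s\<in>UNIV. zero_entry R i j $ s $ \<sigma> s)
     = (if \<sigma> i = j then 0 else (\<Prod>s\<in>UNIV. R $ s $ \<sigma> s))"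
proof (cases "\<sigma> i = j")
  case True
  then have "zero_entry R i j $ i $ \<sigma> i = 0" by (simp add: zero_entry_def)
  with True show ?thesis by (metis (mono_tags) UNIV_I finite prod_zero)
next
  case False
  then have "zero_entry R i j $ s $ \<sigma> s = R $ s $ \<sigma> s" for s
    by (auto simp: zero_entry_def)
  with False show ?thesis by simp
qed

lemma sum_prod_zero_entry:
  fixes R :: "complex^'n::finite^'n"
  shows "(\<Sum>i\<in>UNIV. \<Sum>j\<in>UNIV. \<Prod>s\<in>UNIV. zero_entry R i j $ s $ \<sigma> s)
     = (of_nat CARD('n)^2 - of_nat CARD('n)) * (\<Prod>s\<in>UNIV. R $ s $ \<sigma> s)"
proof -
  let ?P = "\<Prod>s\<in>UNIV. R $ s $ \<sigma> s"
  have "(\<Sum>j\<in>UNIV. \<Prod>s\<in>UNIV. zero_entry R i j $ s $ \<sigma> s) = (of_nat CARD('n) - 1) * ?P" for i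
  proof -
    have "(\<Sum>j\<in>UNIV. \<Prod>s\<in>UNIV. zero_entry R i j $ s $ \<sigma> s) = (\<Sum>j\<in>UNIV - {\<sigma> i}. ?P)"
      by (simp add: prod_zero_entry sum.If_cases Diff_eq Compl_eq)
    also have "\<dots> = (of_nat CARD('n) - 1) * ?P"
      by (simp add: of_nat_diff Suc_leI)
    finally show ?thesis .
  qed
  then have "(\<Sum>i\<in>UNIV. \<Sum>j\<in>UNIV. \<Prod>s\<in>UNIV. zero_entry R i j $ s $ \<sigma> s)
      = of_nat CARD('n) * ((of_nat CARD('n) - 1) * ?P)"
    by simp
  then show ?thesis
    by (simp add: power2_eq_square algebra_simps)
qed

lemma matrix_function_sum_zero_entry:
  fixes R :: "complex^'n::finite^'n"
  shows "(of_nat CARD('n)^2 - of_nat CARD('n)) * matrix_function f R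
     = (\<Sum>i\<in>UNIV. \<Sum>j\<in>UNIV. matrix_function f (zero_entry R i j))"
proof -
  let ?S = "{\<sigma>. \<sigma> permutes (UNIV :: 'n set)}"
  have "(of_nat CARD('n)^2 - of_nat CARD('n)) * matrix_function f R
      = (\<Sum>\<sigma>\<in>?S. f \<sigma> * (\<Sum>i\<in>UNIV. \<Sum>j\<in>UNIV. \<Prod>s\<in>UNIV. zero_entry R i j $ s $ \<sigma> s))"
    by (simp add: matrix_function_def sum_prod_zero_entry sum_distrib_left mult.left_commute)
  also have "\<dots> = (\<Sum>\<sigma>\<in>?S. \<Sum>i\<in>UNIV. \<Sum>j\<in>UNIV. f \<sigma> * (\<Prod>s\<in>UNIV. zero_entry R i j $ s $ \<sigma> s))"
    by (simp add: sum_distrib_left)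
  also have "\<dots> = (\<Sum>i\<in>UNIV. \<Sum>j\<in>UNIV. matrix_function f (zero_entry R i j))"
    unfolding matrix_function_def by (subst sum.swap, subst sum.swap) (rule refl)
  finally show ?thesis .
qed

theorem lemma3p3:
  fixes R :: "complex^'n::finite^'n"
  assumes "CARD('n) \<ge> 2"
  shows "(of_nat (CARD('n))^2 - of_nat (CARD('n))) * d2 R
         = (\<Sum>i\<in>UNIV. \<Sum>j\<in>UNIV. d2 (zero_entry R i j))"
  unfolding d2_eq_matrix_function by (rule matrix_function_sum_zero_entry)

end
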